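(* For every integer $n\ge 4$ and every integer $t$ with $2\le t\le n-3$, $\mathrm{wdim}_{2n-2t}(K_n\times K_n)=n^2-tn$.
   Context: $K_n\times K_n$ is the direct product of two complete graphs on $n$ vertices: vertex set $[n]\times[n]$ with $[n]=\{1,\dots,n\}$, and $(i,j)$ adjacent to $(i',j')$ iff $i\ne i'$ and $j\ne j'$. For a connected graph $G$ with distance $d_G$, vertices $x,y,z$ and $S\subseteq V(G)$, let $\Delta_z(x,y)=|d_G(x,z)-d_G(y,z)|$ and $\Delta_S(x,y)=\sum_{z\in S}\Delta_z(x,y)$. A set $S$ is a weak $k$-resolving set if $\Delta_S(x,y)\ge k$ for all distinct $x,y\in V(G)$, and $\mathrm{wdim}_k(G)$ is the minimum cardinality of a weak $k$-resolving set of $G$. *)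

theory Defs
  imports Main
begin

fun walk :: "'a set \<Rightarrow> ('a \<Rightarrow> 'a \<Rightarrow> bool) \<Rightarrow> nat \<Rightarrow> 'a \<Rightarrow> 'a \<Rightarrow> bool" where
  "walk V E 0 x y = (x \<in> V \<and> x = y)"
| "walk V E (Suc k) x y = (x \<in> V \<and> (\<exists>z\<in>V. E x z \<and> walk V E k z y))"

(* graph distance: length of a shortest walk (used only on connected graphs) *)
definition gdist :: "'a set \<Rightarrow> ('a \<Rightarrow> 'a \<Rightarrow> bool) \<Rightarrow> 'a \<Rightarrow> 'a \<Rightarrow> nat" where
  "gdist V E x y = (LEAST k. walk V E k x y)"

definition connected_graph :: "'a set \<Rightarrow> ('a \<Rightarrow> 'a \<Rightarrow> bool) \<Rightarrow> bool" where
  "connected_graph V E \<longleftrightarrow> (\<forall>x\<in>V. \<forall>y\<in>V. \<exists>k. walk V E k x y)"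

definition Delta :: "'a set \<Rightarrow> ('a \<Rightarrow> 'a \<Rightarrow> bool) \<Rightarrow> 'a \<Rightarrow> 'a \<Rightarrow> 'a \<Rightarrow> nat" where
  "Delta V E z x y = nat \<bar>int (gdist V E x z) - int (gdist V E y z)\<bar>"

definition DeltaS :: "'a set \<Rightarrow> ('a \<Rightarrow> 'a \<Rightarrow> bool) \<Rightarrow> 'a set \<Rightarrow> 'a \<Rightarrow> 'a \<Rightarrow> nat" where
  "DeltaS V E S x y = (\<Sum>z\<in>S. Delta V E z x y)"

definition weak_k_resolving :: "'a set \<Rightarrow> ('a \<Rightarrow> 'a \<Rightarrow> bool) \<Rightarrow> nat \<Rightarrow> 'a set \<Rightarrow> bool" where
  "weak_k_resolving V E k S \<longleftrightarrow> S \<subseteq> V \<and>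
     (\<forall>x\<in>V. \<forall>y\<in>V. x \<noteq> y \<longrightarrow> DeltaS V E S x y \<ge> k)"

definition wdim :: "nat \<Rightarrow> 'a set \<Rightarrow> ('a \<Rightarrow> 'a \<Rightarrow> bool) \<Rightarrow> nat" where
  "wdim k V E = (LEAST m. \<exists>S. weak_k_resolving V E k S \<and> card S = m)"

definition KxK_V :: "nat \<Rightarrow> (nat \<times> nat) set" where
  "KxK_V n = {1..n} \<times> {1..n}"

definition KxK_E :: "(nat \<times> nat) \<Rightarrow> (nat \<times> nat) \<Rightarrow> bool" where
  "KxK_E u v \<longleftrightarrow> fst u \<noteq> fst v \<and> snd u \<noteq> snd v"

end

theory Submission
  imports Defs
begin

(* For n >= 3, two distinct vertices of K_n x K_n are at distance 1 if they differ in both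
   coordinates and at distance 2 otherwise.  Hence for two vertices in a common row, Delta_S counts
   the cells of S in their two columns, plus the two vertices themselves if they lie in S; for
   adjacent vertices it counts the cells of S in their two rows and two columns, minus 1 for each of
   the two vertices and 2 for each of the two other corners of their rectangle that lie in S.

   Upper bound: the cyclic band {(i,j). (i + j) mod n < n - t} has n - t cells in every row and
   column, which gives weight at least 2(n - t) for every pair.

   Lower bound: if |S| < n(n - t), the complement T has more than nt cells.  Applied to a row pair,
   the weight condition says that any two columns together contain at most 2t + 1 cells of T, which
   forces every column, and by the coordinate swap every row, to contain at least t cells of T, and
   some column b to contain t + 1.  A cell (a,b) of T then has a second cell (a,d) of T in its row
   (t >= 2), and the pair (a,b), (a,d) violates the weight condition. *)

definition graph_automorphism :: "'a set \<Rightarrow> ('a \<Rightarrow> 'a \<Rightarrow> bool) \<Rightarrow> ('a \<Rightarrow> 'a) \<Rightarrow> bool" where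
  "graph_automorphism V E \<sigma> \<longleftrightarrow> bij_betw \<sigma> V V \<and> (\<forall>x\<in>V. \<forall>y\<in>V. E (\<sigma> x) (\<sigma> y) = E x y)"

lemma walk_automorphism:
  assumes \<sigma>: "graph_automorphism V E \<sigma>" and "x \<in> V" "y \<in> V"
  shows "walk V E k (\<sigma> x) (\<sigma> y) \<longleftrightarrow> walk V E k x y"
  using \<open>x \<in> V\<close>
proof (induction k arbitrary: x)
  case 0
  then show ?case
    using \<sigma> \<open>y \<in> V\<close> by (auto simp: graph_automorphism_def bij_betw_def inj_on_def)
next
  case (Suc k)
  have "\<sigma> ` V = V" and "\<forall>x\<in>V. \<forall>y\<in>V. E (\<sigma> x) (\<sigma> y) = E x y"
    using \<sigma> by (auto simp: graph_automorphism_def bij_betw_def)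
  then have "(\<exists>z\<in>V. E (\<sigma> x) z \<and> walk V E k z (\<sigma> y)) \<longleftrightarrow> (\<exists>z\<in>V. E x z \<and> walk V E k z y)"
    using Suc by (metis (no_types, lifting) image_iff)
  then show ?case
    using Suc.prems \<open>\<sigma> ` V = V\<close> by auto
qed

lemma gdist_automorphism:
  "graph_automorphism V E \<sigma> \<Longrightarrow> x \<in> V \<Longrightarrow> y \<in> V \<Longrightarrow> gdist V E (\<sigma> x) (\<sigma> y) = gdist V E x y"
  by (simp add: gdist_def walk_automorphism)

lemma DeltaS_automorphism:
  assumes \<sigma>: "graph_automorphism V E \<sigma>" and "S \<subseteq> V" "x \<in> V" "y \<in> V"
  shows "DeltaS V E (\<sigma> ` S) (\<sigma> x) (\<sigma> y) = DeltaS V E S x y"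
proof -
  have "inj_on \<sigma> S"
    using \<sigma> \<open>S \<subseteq> V\<close> by (auto simp: graph_automorphism_def bij_betw_def intro: inj_on_subset)
  then show ?thesis
    using assms by (auto simp: DeltaS_def Delta_def sum.reindex gdist_automorphism intro!: sum.cong)
qed

lemma weak_k_resolving_automorphism:
  assumes \<sigma>: "graph_automorphism V E \<sigma>" and S: "weak_k_resolving V E k S"
  shows "weak_k_resolving V E k (\<sigma> ` S)"
  unfolding weak_k_resolving_def
proof (intro conjI ballI impI)
  have V: "\<sigma> ` V = V"
    using \<sigma> by (simp add: graph_automorphism_def bij_betw_def)
  show "\<sigma> ` S \<subseteq> V"
    using S V by (auto simp: weak_k_resolving_def)
  fix x' y' assume "x' \<in> V" "y' \<in> V" "x' \<noteq> y'"
  then obtain x y where "x \<in> V" "y \<in> V" "x \<noteq> y" "x' = \<sigma> x" "y' = \<sigma> y"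
    using V by (metis imageE)
  then show "k \<le> DeltaS V E (\<sigma> ` S) x' y'"
    using S by (simp add: DeltaS_automorphism \<sigma> weak_k_resolving_def)
qed

lemma wdim_eqI:
  assumes "weak_k_resolving V E k S" "card S = m"
    and "\<And>S'. weak_k_resolving V E k S' \<Longrightarrow> m \<le> card S'"
  shows "wdim k V E = m"
  unfolding wdim_def using assms by (intro Least_equality) auto

lemma gdist_self: "x \<in> V \<Longrightarrow> gdist V E x x = 0"
  by (simp add: gdist_def)

lemma gdist_edge:
  assumes "x \<in> V" "y \<in> V" "E x y" "x \<noteq> y"
  shows "gdist V E x y = 1"
  unfolding gdist_def
proof (rule Least_equality)
  show "walk V E 1 x y"
    using assms by auto
  show "1 \<le> k" if "walk V E k x y" for k
    using that \<open>x \<noteq> y\<close> by (cases k) auto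
qed

lemma gdist_common_neighbour:
  assumes "x \<in> V" "y \<in> V" "z \<in> V" "E x z" "E z y" "x \<noteq> y" "\<not> E x y"
  shows "gdist V E x y = 2"
  unfolding gdist_def
proof (rule Least_equality)
  show "walk V E 2 x y"
    using assms by (auto simp: numeral_2_eq_2)
  show "2 \<le> k" if "walk V E k x y" for k
  proof (rule ccontr)
    assume "\<not> 2 \<le> k"
    then have "k = 0 \<or> k = 1" by auto
    then show False using that assms(6,7) by auto
  qed
qed

lemma sum_le_of_pairwise_sum_le:
  fixes f :: "'a \<Rightarrow> nat"
  assumes "finite B" "2 \<le> card B"
    and pair: "\<And>b c. b \<in> B \<Longrightarrow> c \<in> B \<Longrightarrow> b \<noteq> c \<Longrightarrow> f b + f c \<le> 2 * t + 1"
  shows "(\<Sum>b\<in>B. f b) \<le> card B * t + 1"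
proof (cases "\<exists>b\<in>B. t < f b")
  case False
  then have "(\<Sum>b\<in>B. f b) \<le> card B * t"
    using sum_bounded_above[of B f t] by (simp add: not_less)
  then show ?thesis by simp
next
  case True
  then obtain b where b: "b \<in> B" "t < f b" by blast
  have "card (B - {b}) \<noteq> 0"
    using assms(1,2) b(1) by simp
  then have "B - {b} \<noteq> {}"
    by force
  then obtain c where c: "c \<in> B - {b}" by blast
  define R where "R = B - {b} - {c}"
  have "f j \<le> t" if "j \<in> R" for j
  proof -
    have "f b + f j \<le> 2 * t + 1"
      using that by (intro pair b(1)) (auto simp: R_def)
    with b(2) show ?thesis by linarith
  qed
  then have "(\<Sum>j\<in>R. f j) \<le> card R * t"
    using sum_bounded_above[of R f t] by simp
  moreover have "(\<Sum>j\<in>B. f j) = f b + f c + (\<Sum>j\<in>R. f j)"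
    using assms(1) b(1) c by (simp add: R_def sum.remove)
  moreover have "card B = card R + 2"
    using assms(1,2) b(1) c by (simp add: R_def)
  moreover have "f b + f c \<le> 2 * t + 1"
    using b(1) c by (intro pair) auto
  ultimately show ?thesis
    by (simp add: algebra_simps)
qed

lemma ge_of_pairwise_sum_le:
  fixes f :: "'a \<Rightarrow> nat"
  assumes "finite A" "3 \<le> card A"
    and pair: "\<And>b c. b \<in> A \<Longrightarrow> c \<in> A \<Longrightarrow> b \<noteq> c \<Longrightarrow> f b + f c \<le> 2 * t + 1"
    and sum: "card A * t + 1 \<le> (\<Sum>b\<in>A. f b)"
    and "a \<in> A"
  shows "t \<le> f a"
proof -
  have "(\<Sum>b\<in>A - {a}. f b) \<le> card (A - {a}) * t + 1"
    using assms by (intro sum_le_of_pairwise_sum_le) auto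
  moreover have "(\<Sum>b\<in>A. f b) = f a + (\<Sum>b\<in>A - {a}. f b)"
    using assms(1,5) by (rule sum.remove)
  moreover have "card A = Suc (card (A - {a}))"
    using assms(1,5) by (rule card_Suc_Diff1[symmetric])
  ultimately show ?thesis
    using sum by simp
qed

lemma bij_betw_add_mod: "bij_betw (\<lambda>i. (i + j) mod n) {1..n} {..<n::nat}"
proof -
  have inj: "inj_on (\<lambda>i. (i + j) mod n) {1..n}"
  proof (intro linorder_inj_onI')
    fix x y assume "x \<in> {1..n}" "y \<in> {1..n}" "x < y"
    then have "\<not> n dvd (y + j) - (x + j)"
      by (simp add: nat_dvd_not_less)
    then show "(x + j) mod n \<noteq> (y + j) mod n"
      using mod_eq_dvd_iff_nat[of "x + j" "y + j" n] \<open>x < y\<close> by auto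
  qed
  moreover have "(\<lambda>i. (i + j) mod n) ` {1..n} = {..<n}"
    using card_image[OF inj] by (intro card_subset_eq) auto
  ultimately show ?thesis
    by (simp add: bij_betw_def)
qed

lemma finite_KxK_V [simp]: "finite (KxK_V n)"
  by (simp add: KxK_V_def)

lemma finite_subset_KxK_V: "S \<subseteq> KxK_V n \<Longrightarrow> finite S"
  using finite_KxK_V finite_subset by blast

lemma swap_KxK_V: "prod.swap ` KxK_V n = KxK_V n"
  by (simp add: KxK_V_def product_swap)

lemma graph_automorphism_swap: "graph_automorphism (KxK_V n) KxK_E prod.swap"
  by (auto simp: graph_automorphism_def KxK_E_def swap_KxK_V bij_betw_def)

lemma exists_avoiding_two:
  assumes "3 \<le> n"
  shows "\<exists>r\<in>{1..n::nat}. r \<noteq> a \<and> r \<noteq> c"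
proof -
  have "card {a, c} < card {1..n}"
    using assms by (simp add: card_insert_if)
  then have "\<not> {1..n} \<subseteq> {a, c}"
    by (meson card_mono finite.emptyI finite.insertI leD)
  then show ?thesis by auto
qed

lemma gdist_KxK:
  assumes "3 \<le> n" "x \<in> KxK_V n" "z \<in> KxK_V n"
  shows "gdist (KxK_V n) KxK_E x z = (if x = z then 0 else if KxK_E x z then 1 else 2)"
proof -
  consider "x = z" | "x \<noteq> z" "KxK_E x z" | "x \<noteq> z" "\<not> KxK_E x z"
    by blast
  then show ?thesis
  proof cases
    case 1
    then show ?thesis using assms by (simp add: gdist_self)
  next
    case 2
    then show ?thesis using assms by (simp add: gdist_edge)
  next
    case 3
    obtain r where "r \<in> {1..n}" "r \<noteq> fst x" "r \<noteq> fst z"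
      using exists_avoiding_two[OF \<open>3 \<le> n\<close>] by blast
    moreover obtain s where "s \<in> {1..n}" "s \<noteq> snd x" "s \<noteq> snd z"
      using exists_avoiding_two[OF \<open>3 \<le> n\<close>] by blast
    ultimately have "(r, s) \<in> KxK_V n" "KxK_E x (r, s)" "KxK_E (r, s) z"
      by (auto simp: KxK_V_def KxK_E_def)
    with 3 show ?thesis
      using assms by (simp add: gdist_common_neighbour)
  qed
qed

lemma Delta_KxK_same_row:
  assumes "3 \<le> n" "(a, b) \<in> KxK_V n" "(a, d) \<in> KxK_V n" "z \<in> KxK_V n" "b \<noteq> d"
  shows "Delta (KxK_V n) KxK_E z (a, b) (a, d) =
    of_bool (snd z = b) + of_bool (snd z = d) + of_bool (z = (a, b)) + of_bool (z = (a, d))"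
  using assms by (cases z) (auto simp: Delta_def gdist_KxK KxK_E_def)

lemma Delta_KxK_adjacent:
  assumes "3 \<le> n" "(a, b) \<in> KxK_V n" "(c, d) \<in> KxK_V n" "z \<in> KxK_V n" "a \<noteq> c" "b \<noteq> d"
  shows "int (Delta (KxK_V n) KxK_E z (a, b) (c, d)) =
    of_bool (fst z = a) + of_bool (fst z = c) + of_bool (snd z = b) + of_bool (snd z = d)
    - of_bool (z = (a, b)) - of_bool (z = (c, d)) - 2 * of_bool (z = (a, d)) - 2 * of_bool (z = (c, b))"
  using assms by (cases z) (auto simp: Delta_def gdist_KxK KxK_E_def)

definition row_count :: "(nat \<times> nat) set \<Rightarrow> nat \<Rightarrow> nat" where
  "row_count S i = card {z \<in> S. fst z = i}"

definition col_count :: "(nat \<times> nat) set \<Rightarrow> nat \<Rightarrow> nat" where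
  "col_count S j = card {z \<in> S. snd z = j}"

lemma col_count_swap: "col_count (prod.swap ` S) i = row_count S i"
proof -
  have "{z \<in> prod.swap ` S. snd z = i} = prod.swap ` {z \<in> S. fst z = i}"
    by (auto simp: image_iff)
  then show ?thesis
    by (simp add: col_count_def row_count_def card_image)
qed

lemma DeltaS_KxK_same_row:
  assumes "3 \<le> n" "(a, b) \<in> KxK_V n" "(a, d) \<in> KxK_V n" "S \<subseteq> KxK_V n" "b \<noteq> d"
  shows "DeltaS (KxK_V n) KxK_E S (a, b) (a, d) =
    col_count S b + col_count S d + of_bool ((a, b) \<in> S) + of_bool ((a, d) \<in> S)"
proof -
  have "finite S"
    using assms(4) by (rule finite_subset_KxK_V)
  have "DeltaS (KxK_V n) KxK_E S (a, b) (a, d) = (\<Sum>z\<in>S.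
      of_bool (snd z = b) + of_bool (snd z = d) + of_bool (z = (a, b)) + of_bool (z = (a, d)))"
    unfolding DeltaS_def using assms by (intro sum.cong refl) (simp add: Delta_KxK_same_row subsetD)
  also have "\<dots> = col_count S b + col_count S d + of_bool ((a, b) \<in> S) + of_bool ((a, d) \<in> S)"
    using \<open>finite S\<close> by (simp add: sum.distrib col_count_def Int_def Collect_conv_if)
  finally show ?thesis .
qed

lemma DeltaS_KxK_same_col:
  assumes "3 \<le> n" "(a, b) \<in> KxK_V n" "(c, b) \<in> KxK_V n" "S \<subseteq> KxK_V n" "a \<noteq> c"
  shows "DeltaS (KxK_V n) KxK_E S (a, b) (c, b) =
    row_count S a + row_count S c + of_bool ((a, b) \<in> S) + of_bool ((c, b) \<in> S)"
proof -
  have swap_S: "prod.swap ` S \<subseteq> KxK_V n"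
    using assms(4) swap_KxK_V by blast
  have "DeltaS (KxK_V n) KxK_E S (a, b) (c, b) = DeltaS (KxK_V n) KxK_E (prod.swap ` S) (b, a) (b, c)"
    using DeltaS_automorphism[OF graph_automorphism_swap assms(4,2,3)] by simp
  also have "\<dots> = row_count S a + row_count S c
      + of_bool ((b, a) \<in> prod.swap ` S) + of_bool ((b, c) \<in> prod.swap ` S)"
    using DeltaS_KxK_same_row[OF assms(1) _ _ swap_S assms(5)] assms(2,3)
    by (simp add: KxK_V_def col_count_swap)
  finally show ?thesis
    by simp
qed

lemma DeltaS_KxK_adjacent:
  assumes "3 \<le> n" "(a, b) \<in> KxK_V n" "(c, d) \<in> KxK_V n" "S \<subseteq> KxK_V n" "a \<noteq> c" "b \<noteq> d"
  shows "int (DeltaS (KxK_V n) KxK_E S (a, b) (c, d)) =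
    int (row_count S a) + int (row_count S c) + int (col_count S b) + int (col_count S d)
    - of_bool ((a, b) \<in> S) - of_bool ((c, d) \<in> S) - 2 * of_bool ((a, d) \<in> S) - 2 * of_bool ((c, b) \<in> S)"
proof -
  have "finite S"
    using assms(4) by (rule finite_subset_KxK_V)
  have "int (DeltaS (KxK_V n) KxK_E S (a, b) (c, d)) = (\<Sum>z\<in>S.
      of_bool (fst z = a) + of_bool (fst z = c) + of_bool (snd z = b) + of_bool (snd z = d)
      - of_bool (z = (a, b)) - of_bool (z = (c, d)) - 2 * of_bool (z = (a, d)) - 2 * of_bool (z = (c, b)))"
    unfolding DeltaS_def of_nat_sum using assms by (intro sum.cong refl) (simp add: Delta_KxK_adjacent subsetD)
  also have "\<dots> = int (row_count S a) + int (row_count S c) + int (col_count S b) + int (col_count S d)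
      - of_bool ((a, b) \<in> S) - of_bool ((c, d) \<in> S) - 2 * of_bool ((a, d) \<in> S) - 2 * of_bool ((c, b) \<in> S)"
    using \<open>finite S\<close>
    by (simp add: sum.distrib sum_subtractf sum_distrib_left[symmetric] row_count_def col_count_def Int_def Collect_conv_if)
  finally show ?thesis .
qed

lemma sum_col_count:
  assumes "S \<subseteq> KxK_V n"
  shows "(\<Sum>j\<in>{1..n}. col_count S j) = card S"
proof -
  have "S = (\<Union>j\<in>{1..n}. {z \<in> S. snd z = j})"
    using assms by (auto simp: KxK_V_def)
  also have "card \<dots> = (\<Sum>j\<in>{1..n}. col_count S j)"
    using finite_subset_KxK_V[OF assms] by (subst card_UN_disjoint) (auto simp: col_count_def)
  finally show ?thesis by simp
qed

lemma col_count_complement: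
  assumes "S \<subseteq> KxK_V n" "j \<in> {1..n}"
  shows "col_count S j + col_count (KxK_V n - S) j = n"
proof -
  have column: "{z \<in> KxK_V n. snd z = j} = {1..n} \<times> {j}"
    using assms(2) by (auto simp: KxK_V_def)
  have "{z \<in> KxK_V n - S. snd z = j} = {z \<in> KxK_V n. snd z = j} - {z \<in> S. snd z = j}"
    by auto
  moreover have "{z \<in> S. snd z = j} \<subseteq> {z \<in> KxK_V n. snd z = j}"
    using assms(1) by auto
  ultimately have "col_count (KxK_V n - S) j = n - col_count S j"
    by (simp add: col_count_def card_Diff_subset finite_subset_KxK_V[OF assms(1)] column card_cartesian_product)
  moreover have "col_count S j \<le> n"
    unfolding col_count_def using card_mono[OF _ \<open>{z \<in> S. snd z = j} \<subseteq> _\<close>]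
    by (simp add: column card_cartesian_product)
  ultimately show ?thesis by simp
qed

lemma col_count_pos_iff: "finite S \<Longrightarrow> 0 < col_count S j \<longleftrightarrow> (\<exists>i. (i, j) \<in> S)"
  by (force simp: col_count_def card_gt_0_iff)

lemma complement_same_row_bound:
  assumes "3 \<le> n" "weak_k_resolving (KxK_V n) KxK_E k S"
    and "a \<in> {1..n}" "b \<in> {1..n}" "d \<in> {1..n}" "b \<noteq> d"
  defines "T \<equiv> KxK_V n - S"
  shows "k + col_count T b + col_count T d + of_bool ((a, b) \<in> T) + of_bool ((a, d) \<in> T) \<le> 2 * n + 2"
proof -
  have S: "S \<subseteq> KxK_V n"
    using assms(2) by (simp add: weak_k_resolving_def)
  have ab: "(a, b) \<in> KxK_V n" and ad: "(a, d) \<in> KxK_V n"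
    using assms(3-5) by (auto simp: KxK_V_def)
  have "k \<le> DeltaS (KxK_V n) KxK_E S (a, b) (a, d)"
    using assms(2,6) ab ad by (simp add: weak_k_resolving_def)
  also have "\<dots> = col_count S b + col_count S d + of_bool ((a, b) \<in> S) + of_bool ((a, d) \<in> S)"
    using assms(1) ab ad S assms(6) by (rule DeltaS_KxK_same_row)
  finally show ?thesis
    using col_count_complement[OF S assms(4)] col_count_complement[OF S assms(5)] ab ad
    by (auto simp: T_def)
qed

lemma sum_complement_col_count_gt:
  assumes "S \<subseteq> KxK_V n" "card S < n * (n - t)"
  shows "n * t < (\<Sum>j\<in>{1..n}. col_count (KxK_V n - S) j)"
proof -
  have "card (KxK_V n - S) = n * n - card S"
    using assms(1) by (simp add: card_Diff_subset finite_subset_KxK_V KxK_V_def card_cartesian_product)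
  moreover have "n * (n - t) = n * n - n * t"
    by (simp add: diff_mult_distrib2)
  ultimately show ?thesis
    using assms(2) sum_col_count[of "KxK_V n - S" n] by auto
qed

lemma complement_col_count_ge:
  assumes "3 \<le> n" "weak_k_resolving (KxK_V n) KxK_E (2 * n - 2 * t) S" "card S < n * (n - t)"
    and "j \<in> {1..n}"
  shows "t \<le> col_count (KxK_V n - S) j"
proof -
  define T where "T = KxK_V n - S"
  have S: "S \<subseteq> KxK_V n"
    using assms(2) by (simp add: weak_k_resolving_def)
  have "t < n"
    using assms(3) by (cases "t < n") auto
  have "col_count T b + col_count T d \<le> 2 * t + 1"
    if "b \<in> {1..n}" "d \<in> {1..n}" "b \<noteq> d" for b d
  proof (cases "0 < col_count T b \<or> 0 < col_count T d")
    case True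
    \<comment> \<open>a cell of \<open>T\<close> in row \<open>a\<close> makes the row-pair bound for \<open>(a, b), (a, d)\<close> one smaller\<close>
    then obtain a where a: "(a, b) \<in> T \<or> (a, d) \<in> T"
      using col_count_pos_iff[of T] finite_subset_KxK_V[of T n] by (auto simp: T_def)
    then have "a \<in> {1..n}"
      by (auto simp: T_def KxK_V_def)
    then show ?thesis
      using complement_same_row_bound[OF assms(1,2) _ that] a \<open>t < n\<close> by (fastforce simp: T_def)
  qed simp
  then show ?thesis
    using ge_of_pairwise_sum_le[where f = "col_count T" and A = "{1..n}"] assms(1,4)
      sum_complement_col_count_gt[OF S assms(3)] by (simp add: T_def)
qed

lemma complement_row_count_ge:
  assumes "3 \<le> n" "weak_k_resolving (KxK_V n) KxK_E (2 * n - 2 * t) S" "card S < n * (n - t)"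
    and "i \<in> {1..n}"
  shows "t \<le> row_count (KxK_V n - S) i"
proof -
  have "prod.swap ` (KxK_V n - S) = KxK_V n - prod.swap ` S"
    by (simp add: image_set_diff swap_KxK_V)
  moreover have "t \<le> col_count (KxK_V n - prod.swap ` S) i"
    using assms graph_automorphism_swap
    by (intro complement_col_count_ge) (auto simp: weak_k_resolving_automorphism card_image)
  ultimately show ?thesis
    by (metis col_count_swap)
qed

lemma complement_col_count_gt:
  assumes "S \<subseteq> KxK_V n" "card S < n * (n - t)"
  shows "\<exists>j\<in>{1..n}. t < col_count (KxK_V n - S) j"
proof (rule ccontr)
  assume "\<not> ?thesis"
  then have "(\<Sum>j\<in>{1..n}. col_count (KxK_V n - S) j) \<le> n * t"
    using sum_bounded_above[of "{1..n}" "col_count (KxK_V n - S)" t] by (force simp: not_less)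
  then show False
    using sum_complement_col_count_gt[OF assms] by simp
qed

lemma exists_other_in_row:
  assumes "finite T" "2 \<le> row_count T a"
  obtains d where "(a, d) \<in> T" "d \<noteq> b"
proof -
  have "\<not> {z \<in> T. fst z = a} \<subseteq> {(a, b)}"
  proof
    assume "{z \<in> T. fst z = a} \<subseteq> {(a, b)}"
    then have "row_count T a \<le> 1"
      unfolding row_count_def using card_mono[of "{(a, b)}"] by fastforce
    then show False
      using assms(2) by simp
  qed
  then obtain z where "z \<in> T" "fst z = a" "z \<noteq> (a, b)"
    by blast
  then show ?thesis
    using that by (metis prod.collapse)
qed

lemma card_weak_resolving_KxK_ge:
  assumes "2 \<le> t" "3 \<le> n" "weak_k_resolving (KxK_V n) KxK_E (2 * n - 2 * t) S"
  shows "n * (n - t) \<le> card S"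
proof (rule ccontr)
  assume "\<not> ?thesis"
  then have small: "card S < n * (n - t)" by simp
  then have "t < n"
    by (cases "t < n") auto
  define T where "T = KxK_V n - S"
  have S: "S \<subseteq> KxK_V n"
    using assms(3) by (simp add: weak_k_resolving_def)
  obtain b where b: "b \<in> {1..n}" "t < col_count T b"
    using complement_col_count_gt[OF S small] by (auto simp: T_def)
  then obtain a where ab: "(a, b) \<in> T"
    using col_count_pos_iff[of T b] finite_subset_KxK_V[of T n] by (auto simp: T_def)
  then have a: "a \<in> {1..n}"
    by (auto simp: T_def KxK_V_def)
  have "finite T"
    by (simp add: T_def)
  moreover have "2 \<le> row_count T a"
    using complement_row_count_ge[OF assms(2,3) small a] assms(1) by (simp add: T_def)
  ultimately obtain d where ad: "(a, d) \<in> T" "d \<noteq> b"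
    by (rule exists_other_in_row)
  then have d: "d \<in> {1..n}"
    by (auto simp: T_def KxK_V_def)
  show False
    using complement_same_row_bound[OF assms(2,3) a b(1) d ad(2)[symmetric]] \<open>t < n\<close>
      complement_col_count_ge[OF assms(2,3) small d] b(2) ab ad(1)
    by (simp add: T_def)
qed

definition cyclic_band :: "nat \<Rightarrow> nat \<Rightarrow> (nat \<times> nat) set" where
  "cyclic_band n m = {(i, j) \<in> KxK_V n. (i + j) mod n < m}"

lemma col_count_cyclic_band:
  assumes "m \<le> n" "j \<in> {1..n}"
  shows "col_count (cyclic_band n m) j = m"
proof -
  have "{z \<in> cyclic_band n m. snd z = j} = (\<lambda>i. (i, j)) ` {i \<in> {1..n}. (i + j) mod n < m}"
    using assms(2) by (auto simp: cyclic_band_def KxK_V_def)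
  then have "col_count (cyclic_band n m) j = card {i \<in> {1..n}. (i + j) mod n < m}"
    by (simp add: col_count_def card_image inj_on_def)
  also have "\<dots> = card {y \<in> {..<n}. y < m}"
  proof (rule bij_betw_same_card)
    show "bij_betw (\<lambda>i. (i + j) mod n) {i \<in> {1..n}. (i + j) mod n < m} {y \<in> {..<n}. y < m}"
      by (rule bij_betw_Collect[OF bij_betw_add_mod]) simp
  qed
  also have "{y \<in> {..<n}. y < m} = {..<m}"
    using assms(1) by auto
  finally show ?thesis
    by simp
qed

lemma cyclic_band_subset: "cyclic_band n m \<subseteq> KxK_V n"
  by (auto simp: cyclic_band_def)

lemma swap_cyclic_band: "prod.swap ` cyclic_band n m = cyclic_band n m"
  by (auto simp: cyclic_band_def KxK_V_def image_iff add.commute)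

lemma row_count_cyclic_band:
  assumes "m \<le> n" "i \<in> {1..n}"
  shows "row_count (cyclic_band n m) i = m"
  using col_count_cyclic_band[OF assms] by (metis col_count_swap swap_cyclic_band)

lemma card_cyclic_band:
  assumes "m \<le> n"
  shows "card (cyclic_band n m) = n * m"
proof -
  have "card (cyclic_band n m) = (\<Sum>j\<in>{1..n}. col_count (cyclic_band n m) j)"
    using sum_col_count[OF cyclic_band_subset] by simp
  also have "\<dots> = (\<Sum>j\<in>{1..n}. m)"
    using assms by (intro sum.cong refl col_count_cyclic_band)
  finally show ?thesis by simp
qed

lemma weak_k_resolving_KxK_of_regular:
  assumes "3 \<le> n" "3 \<le> m" "S \<subseteq> KxK_V n"
    and rows: "\<And>i. i \<in> {1..n} \<Longrightarrow> row_count S i = m"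
    and cols: "\<And>j. j \<in> {1..n} \<Longrightarrow> col_count S j = m"
  shows "weak_k_resolving (KxK_V n) KxK_E (2 * m) S"
  unfolding weak_k_resolving_def
proof (intro conjI ballI impI)
  show "S \<subseteq> KxK_V n" by fact
  fix x y assume x: "x \<in> KxK_V n" and y: "y \<in> KxK_V n" and "x \<noteq> y"
  obtain a b c d where xy: "x = (a, b)" "y = (c, d)"
    by (cases x, cases y)
  have a: "a \<in> {1..n}" and b: "b \<in> {1..n}" and c: "c \<in> {1..n}" and d: "d \<in> {1..n}"
    using x y by (auto simp: KxK_V_def xy)
  consider "a = c" "b \<noteq> d" | "a \<noteq> c" "b = d" | "a \<noteq> c" "b \<noteq> d"
    using \<open>x \<noteq> y\<close> xy by blast
  then show "2 * m \<le> DeltaS (KxK_V n) KxK_E S x y"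
  proof cases
    case 1
    then show ?thesis
      using DeltaS_KxK_same_row[OF assms(1) _ _ assms(3)] x y cols[OF b] cols[OF d] by (simp add: xy)
  next
    case 2
    then show ?thesis
      using DeltaS_KxK_same_col[OF assms(1) _ _ assms(3)] x y rows[OF a] rows[OF c] by (simp add: xy)
  next
    case 3
    have "4 * int m - 6 \<le> int (DeltaS (KxK_V n) KxK_E S x y)"
      using DeltaS_KxK_adjacent[OF assms(1) _ _ assms(3) 3] x y rows[OF a] rows[OF c] cols[OF b] cols[OF d]
      by (simp add: xy of_bool_def)
    then show ?thesis
      using \<open>3 \<le> m\<close> by linarith
  qed
qed

theorem mainTheorem9:
  fixes n t :: nat
  assumes "n \<ge> 4" and "2 \<le> t" and "t + 3 \<le> n"
  shows "wdim (2*n - 2*t) (KxK_V n) KxK_E = n^2 - t*n"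
proof -
  have "weak_k_resolving (KxK_V n) KxK_E (2 * (n - t)) (cyclic_band n (n - t))"
    using assms
    by (intro weak_k_resolving_KxK_of_regular cyclic_band_subset row_count_cyclic_band col_count_cyclic_band) auto
  moreover have "2 * (n - t) = 2 * n - 2 * t" and "n^2 - t * n = n * (n - t)"
    by (simp_all add: power2_eq_square diff_mult_distrib2 mult.commute)
  ultimately show ?thesis
    using card_cyclic_band[of "n - t" n] card_weak_resolving_KxK_ge[OF assms(2)] assms(3)
    by (intro wdim_eqI) auto
qed

end
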